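(* Let $\lambda_1$ be a Dyck path of length $2n_1$ and $\lambda_2$ a Dyck path of length $2m_1$, and let $\lambda=\lambda_1\lambda_2$ be their concatenation. Then $$P_{\lambda,\lambda_0}=\genfrac{[}{]}{0pt}{}{n_1+m_1}{n_1}P_{\lambda_1,\lambda_0}P_{\lambda_2,\lambda_0}.$$
   Context: $[n]=\sum_{i=0}^{n-1}q^i$, $[n]!=\prod_{i=1}^n[i]$, $\genfrac{[}{]}{0pt}{}{n}{k}=[n]!/([k]![n-k]!)$. For a Dyck word $\lambda$: chords are matched $U$–$D$ pairs (parenthesis matching); $A(\lambda)$ is the rooted plane tree with one edge per chord, the edge of chord $c$ hanging directly below the edge of the innermost chord strictly containing $c$, or from the root if none; siblings ordered left to right. The capacity of a leaf edge (a chord whose $U$ is immediately followed by its $D$), with respect to $\lambda_0$ the all-$U$ word of the length of $\lambda$, is the number of $D$'s of $\lambda$ strictly to the left of that $U$. A labelling of Lascoux--Sch\"utzenberger type assigns non-negative integers to edges so that each edge's label is at most those of the edges directly below it, and each leaf edge's label is at most its capacity. $P_{\lambda,\lambda_0}=\sum q^{\text{sum of labels}}$ over these labellings. *)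

theory Defs
  imports "HOL-Computational_Algebra.Polynomial"
begin

(* Words over {U,D}: True = U, False = D. *)

definition qint :: "nat \<Rightarrow> int poly" where
  "qint n = (\<Sum>i<n. monom 1 i)"

definition qfact :: "nat \<Rightarrow> int poly" where
  "qfact n = (\<Prod>i=1..n. qint i)"

definition qbinom :: "nat \<Rightarrow> nat \<Rightarrow> int poly" where
  "qbinom n k = qfact n div (qfact k * qfact (n - k))"

definition ht :: "bool list \<Rightarrow> nat \<Rightarrow> int" where
  "ht w k = int (length (filter id (take k w))) - int (length (filter Not (take k w)))"

definition dyck :: "bool list \<Rightarrow> bool" where
  "dyck w \<longleftrightarrow> ht w (length w) = 0 \<and> (\<forall>k\<le>length w. ht w k \<ge> 0)"

(* position of the D matched with the U at position i (parenthesis matching) *)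
definition match :: "bool list \<Rightarrow> nat \<Rightarrow> nat" where
  "match w i = (LEAST j. i < j \<and> ht w (Suc j) = ht w i)"

definition chords :: "bool list \<Rightarrow> (nat \<times> nat) set" where
  "chords w = {(i, match w i) | i. i < length w \<and> w ! i}"

definition strictly_contains :: "nat \<times> nat \<Rightarrow> nat \<times> nat \<Rightarrow> bool" where
  "strictly_contains c d \<longleftrightarrow> fst c < fst d \<and> snd d < snd c"

(* edge of chord d hangs directly below edge of chord c in A(w):
   c is the innermost chord strictly containing d *)
definition directly_below :: "bool list \<Rightarrow> nat \<times> nat \<Rightarrow> nat \<times> nat \<Rightarrow> bool" where
  "directly_below w d c \<longleftrightarrow> c \<in> chords w \<and> d \<in> chords w \<and> strictly_contains c d \<and>
     \<not> (\<exists>e\<in>chords w. strictly_contains c e \<and> strictly_contains e d)"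

definition leaf_chord :: "nat \<times> nat \<Rightarrow> bool" where
  "leaf_chord c \<longleftrightarrow> snd c = Suc (fst c)"

(* capacity w.r.t. lambda_0: number of D's strictly left of the U *)
definition capacity :: "bool list \<Rightarrow> nat \<times> nat \<Rightarrow> nat" where
  "capacity w c = length (filter Not (take (fst c) w))"

(* labellings of Lascoux--Schuetzenberger type; labels outside the chords are fixed to 0 *)
definition LS_labellings :: "bool list \<Rightarrow> ((nat \<times> nat) \<Rightarrow> nat) set" where
  "LS_labellings w = {L. (\<forall>c. c \<notin> chords w \<longrightarrow> L c = 0) \<and>
      (\<forall>c d. directly_below w d c \<longrightarrow> L c \<le> L d) \<and>
      (\<forall>c\<in>chords w. leaf_chord c \<longrightarrow> L c \<le> capacity w c)}"

definition P_poly :: "bool list \<Rightarrow> int poly" where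
  "P_poly w = (\<Sum>L\<in>LS_labellings w. monom 1 (\<Sum>c\<in>chords w. L c))"

end

theory Submission
  imports Defs
begin

text \<open>
  Let P_s be P with every capacity raised by s, so that P_0 = P. Restricting a labelling of
  uv to the chords of u and to those of v is a bijection, and the chords of v see the #D(u)
  letters D of u to their left; hence P_s(uv) = P_s(u) P_(s + #D(u))(v). In a primitive word
  U x D the root label a is the smallest label and is at most s (compare it with the leftmost
  leaf); subtracting it from the other labels gives
  P_s(U x D) = \<Sum>(a \<le> s) q^(a(m+1)) P_(s-a)(x) with m = #D(x). Along the first-return
  decomposition of Dyck words these two recursions, together with the q-hockey-stick and
  q-trinomial identities, give P_s(w) = [s+n choose n] P(w) for n = #D(w). The theorem is
  the first recursion for the concatenation of the two paths with s = 0, followed by the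
  closed formula for the second path with s = n1.
\<close>

section \<open>Gaussian binomial coefficients\<close>


fun qbin :: "nat \<Rightarrow> nat \<Rightarrow> int poly" where
  "qbin n 0 = 1"
| "qbin 0 (Suc k) = 0"
| "qbin (Suc n) (Suc k) = qbin n k + monom 1 (Suc k) * qbin n (Suc k)"

lemma qint_0 [simp]: "qint 0 = 0"
  by (simp add: qint_def)

lemma qint_Suc: "qint (Suc n) = qint n + monom 1 n"
  by (simp add: qint_def)

lemma qint_add: "qint (a + b) = qint a + monom 1 a * qint b"
  by (induction b) (simp_all add: qint_Suc algebra_simps mult_monom)

lemma qfact_0 [simp]: "qfact 0 = 1"
  by (simp add: qfact_def)

lemma qfact_Suc: "qfact (Suc n) = qfact n * qint (Suc n)"
  by (simp add: qfact_def prod.nat_ivl_Suc')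

lemma poly_qfact_1: "poly (qfact n) 1 = fact n"
proof -
  have "poly (qint n) 1 = int n" for n
    by (simp add: qint_def poly_sum poly_monom)
  then show ?thesis
    by (induction n) (simp_all add: qfact_Suc)
qed

lemma qfact_nonzero: "qfact n \<noteq> 0"
  using poly_qfact_1[of n] by auto

lemma qbin_eq_0: "n < k \<Longrightarrow> qbin n k = 0"
  by (induction n k rule: qbin.induct) auto

lemma qbin_self [simp]: "qbin n n = 1"
  by (induction n) (simp_all add: qbin_eq_0)

lemma qbin_qfact: "k \<le> n \<Longrightarrow> qbin n k * qfact k * qfact (n - k) = qfact n"
proof (induction n k rule: qbin.induct)
  case (3 n k)
  have left: "qbin n k * qfact (Suc k) * qfact (n - k) = qfact n * qint (Suc k)"
    using "3.IH"(1) "3.prems" by (simp add: qfact_Suc algebra_simps)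
  have right: "qbin n (Suc k) * qfact (Suc k) * qfact (n - k) = qfact n * qint (n - k)"
  proof (cases "k = n")
    case False
    then have "qfact (n - k) = qfact (n - Suc k) * qint (n - k)"
      using "3.prems" qfact_Suc[of "n - Suc k"] by (simp add: Suc_diff_Suc)
    then show ?thesis
      using "3.IH"(2) False "3.prems" by (simp add: algebra_simps)
  qed (simp add: qbin_eq_0)
  have "qbin (Suc n) (Suc k) * qfact (Suc k) * qfact (Suc n - Suc k)
      = qbin n k * qfact (Suc k) * qfact (n - k)
        + monom 1 (Suc k) * (qbin n (Suc k) * qfact (Suc k) * qfact (n - k))"
    by (simp add: algebra_simps)
  also have "\<dots> = qfact n * (qint (Suc k) + monom 1 (Suc k) * qint (n - k))"
    unfolding left right by (simp add: algebra_simps)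
  also have "qint (Suc k) + monom 1 (Suc k) * qint (n - k) = qint (Suc n)"
    using "3.prems" qint_add[of "Suc k" "n - k"] by simp
  finally show ?case
    by (simp add: qfact_Suc)
qed simp_all

lemma qbinom_eq_qbin: "k \<le> n \<Longrightarrow> qbinom n k = qbin n k"
  using qbin_qfact[of k n] qfact_nonzero unfolding qbinom_def
  by (metis mult.assoc no_zero_divisors nonzero_mult_div_cancel_right)

lemma qbin_hockey_stick:
  "(\<Sum>a\<le>s. monom 1 (a * Suc m) * qbin (s - a + m) m) = qbin (s + Suc m) (Suc m)"
proof (induction s)
  case (Suc s)
  have "(\<Sum>a\<le>Suc s. monom 1 (a * Suc m) * qbin (Suc s - a + m) m)
      = qbin (Suc s + m) m
        + (\<Sum>a\<le>s. monom 1 (Suc a * Suc m) * qbin (Suc s - Suc a + m) m)"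
    by (simp only: sum.atMost_Suc_shift) simp
  also have "(\<Sum>a\<le>s. monom 1 (Suc a * Suc m) * qbin (Suc s - Suc a + m) m)
      = monom 1 (Suc m) * (\<Sum>a\<le>s. monom 1 (a * Suc m) * qbin (s - a + m) m)"
    unfolding sum_distrib_left by (rule sum.cong) (simp_all add: mult_monom algebra_simps)
  finally show ?case
    using Suc.IH by simp
qed (simp add: qbin_eq_0)

lemma qbin_mult:
  "qbin (s + n) n * qbin (s + n + m) m = qbin (s + n + m) (n + m) * qbin (n + m) m"
proof -
  have "qbin (s + n) n * qbin (s + n + m) m * (qfact n * qfact s * qfact m)
      = qbin (s + n + m) m * qfact m * (qbin (s + n) n * qfact n * qfact s)"
    by (simp only: ac_simps)
  also have "\<dots> = qfact (s + n + m)"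
    using qbin_qfact[of n "s + n"] qbin_qfact[of m "s + n + m"] by simp
  also have "\<dots> = qbin (s + n + m) (n + m) * (qbin (n + m) m * qfact m * qfact n) * qfact s"
    using qbin_qfact[of m "n + m"] qbin_qfact[of "n + m" "s + n + m"] by simp
  also have "\<dots> = qbin (s + n + m) (n + m) * qbin (n + m) m * (qfact n * qfact s * qfact m)"
    by (simp only: ac_simps)
  finally show ?thesis
    using qfact_nonzero by (simp del: mult_cancel_right add: mult_cancel_right[symmetric])
qed


section \<open>Heights and Dyck words\<close>

abbreviation wrap :: "bool list \<Rightarrow> bool list" where
  "wrap x \<equiv> True # x @ [False]"

abbreviation outer_chord :: "bool list \<Rightarrow> nat \<times> nat" where
  "outer_chord x \<equiv> (0, Suc (length x))"

abbreviation num_D :: "bool list \<Rightarrow> nat" where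
  "num_D w \<equiv> length (filter Not w)"

lemma ht_0 [simp]: "ht w 0 = 0"
  by (simp add: ht_def)

lemma ht_append: "ht (u @ v) k = ht u k + ht v (k - length u)"
  by (simp add: ht_def)

lemma ht_beyond: "length w \<le> k \<Longrightarrow> ht w k = ht w (length w)"
  by (simp add: ht_def)

lemma ht_Suc: "k < length w \<Longrightarrow> ht w (Suc k) = ht w k + (if w ! k then 1 else -1)"
  by (simp add: ht_def take_Suc_conv_app_nth)

lemma ht_Suc_ge: "ht w k - 1 \<le> ht w (Suc k)"
  by (cases "k < length w") (simp_all add: ht_Suc ht_beyond[of w k] ht_beyond[of w "Suc k"])

lemma ht_wrap: "k \<le> length x \<Longrightarrow> ht (wrap x) (Suc k) = 1 + ht x k"
  by (simp add: ht_def)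

lemma discrete_ivt:
  fixes f :: "nat \<Rightarrow> int"
  assumes step: "\<And>k. f k - 1 \<le> f (Suc k)"
  shows "a \<le> b \<Longrightarrow> h \<le> f a \<Longrightarrow> f b \<le> h \<Longrightarrow> \<exists>k\<in>{a..b}. f k = h"
proof (induction b)
  case (Suc b)
  show ?case
  proof (cases "a \<le> b \<and> f b \<le> h")
    case True
    then obtain k where "k \<in> {a..b}" "f k = h"
      using Suc.IH Suc.prems(2) by auto
    then show ?thesis by auto
  next
    case False
    then have "f (Suc b) = h \<or> a = Suc b"
      using step[of b] Suc.prems by fastforce
    then show ?thesis using Suc.prems by auto
  qed
qed simp

lemma dyck_ht_final: "dyck w \<Longrightarrow> length w \<le> k \<Longrightarrow> ht w k = 0"
  using ht_beyond[of w k] by (simp add: dyck_def)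

lemma dyck_ht_nonneg:
  assumes "dyck w"
  shows "0 \<le> ht w k"
proof (cases "k \<le> length w")
  case True
  then show ?thesis using assms by (simp add: dyck_def)
next
  case False
  then show ?thesis using dyck_ht_final[OF assms] by simp
qed

lemma dyck_iff: "dyck w \<longleftrightarrow> ht w (length w) = 0 \<and> (\<forall>k. 0 \<le> ht w k)"
  using dyck_ht_nonneg[of w] unfolding dyck_def by blast

lemma ht_append_left: "k \<le> length u \<Longrightarrow> ht (u @ v) k = ht u k"
  by (simp add: ht_append)

lemma ht_append_right: "ht u (length u) = 0 \<Longrightarrow> ht (u @ v) (k + length u) = ht v k"
  using ht_beyond[of u "k + length u"] by (simp add: ht_append)

lemma dyck_wrap: "dyck x \<Longrightarrow> dyck (wrap x)"
proof -
  assume x: "dyck x"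
  have final: "ht (wrap x) (length (wrap x)) = 0"
    using x by (simp add: dyck_def ht_def)
  have "0 \<le> ht (wrap x) k" for k
  proof (cases k)
    case (Suc k')
    then show ?thesis
      using ht_wrap[of k' x] dyck_ht_nonneg[OF x, of k'] ht_beyond[of "wrap x" k] final
      by (cases "k' \<le> length x") auto
  qed simp
  then show ?thesis
    using final by (simp add: dyck_iff)
qed

lemma dyck_suffix:
  assumes w: "dyck (p @ y)" and p: "ht p (length p) = 0"
  shows "dyck y"
proof -
  have y: "ht y k = ht (p @ y) (k + length p)" for k
    using ht_append_right[OF p] by simp
  show ?thesis
    unfolding dyck_iff y using dyck_ht_final[OF w] dyck_ht_nonneg[OF w] by simp
qed

lemma dyck_unwrap:
  assumes final: "ht (wrap x) (length (wrap x)) = 0"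
    and pos: "\<And>i. 0 < i \<Longrightarrow> i < length (wrap x) \<Longrightarrow> 0 < ht (wrap x) i"
  shows "dyck x"
  unfolding dyck_def
proof (intro conjI allI impI)
  show "ht x (length x) = 0"
    using final by (simp add: ht_def)
  fix i assume "i \<le> length x"
  then show "0 \<le> ht x i"
    using ht_wrap[of i x] pos[of "Suc i"] by simp
qed

lemma dyck_first_return:
  assumes w: "dyck w" and ne: "w \<noteq> []"
  obtains x y where "dyck x" "dyck y" "w = wrap x @ y"
proof -
  define k where "k = (LEAST k. 0 < k \<and> ht w k = 0)"
  have ret: "0 < length w \<and> ht w (length w) = 0"
    using w ne by (simp add: dyck_def)
  have k: "0 < k" "ht w k = 0" and k_le: "k \<le> length w"
    using LeastI[where P = "\<lambda>k. 0 < k \<and> ht w k = 0", OF ret]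
      Least_le[where P = "\<lambda>k. 0 < k \<and> ht w k = 0", OF ret]
    by (auto simp: k_def)
  have pos: "0 < ht w i" if "0 < i" "i < k" for i
    using not_less_Least[of i "\<lambda>k. 0 < k \<and> ht w k = 0"] that dyck_ht_nonneg[OF w, of i]
    by (auto simp: k_def)
  obtain w' where w': "w = True # w'"
    using ne pos[of 1] k ht_Suc[of 0 w] dyck_ht_nonneg[OF w, of 1]
    by (cases w) (auto split: if_splits)
  then have "k \<noteq> 1"
    using k by (auto simp: ht_def)
  then obtain j where j: "k = Suc (Suc j)"
    using k by (cases k; cases "k - 1") auto
  have j_len: "j < length w'"
    using k_le w' j by simp
  have "\<not> w' ! j"
    using k ht_Suc[of "Suc j" w] pos[of "Suc j"] j j_len w' by (auto split: if_splits)
  then have split: "w = wrap (take j w') @ drop (Suc j) w'"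
    using w' id_take_nth_drop[OF j_len] by simp
  have prefix: "ht w i = ht (wrap (take j w')) i" if "i \<le> k" for i
    unfolding split using that j j_len by (intro ht_append_left) simp
  have "dyck (take j w')"
    using prefix k pos j j_len by (intro dyck_unwrap) simp_all
  moreover have "dyck (drop (Suc j) w')"
    using dyck_suffix[of "wrap (take j w')"] w split prefix[of k] k j j_len by simp
  ultimately show thesis
    using that split by blast
qed

lemma dyck_induct [consumes 1, case_names Nil wrap append]:
  assumes "dyck w"
    and "P []"
    and "\<And>x. dyck x \<Longrightarrow> P x \<Longrightarrow> P (wrap x)"
    and "\<And>u v. dyck u \<Longrightarrow> dyck v \<Longrightarrow> P u \<Longrightarrow> P v \<Longrightarrow> P (u @ v)"
  shows "P w"
  using assms(1)
proof (induction "length w" arbitrary: w rule: less_induct)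
  case less
  show ?case
  proof (cases "w = []")
    case False
    then obtain x y where xy: "dyck x" "dyck y" "w = wrap x @ y"
      using dyck_first_return less.prems by blast
    have "P (wrap x)"
      using less.hyps[of x] xy assms(3) by simp
    moreover have "P y" if "y \<noteq> []"
      using less.hyps[of y] xy that by simp
    ultimately show ?thesis
      using xy assms(4)[of "wrap x" y] dyck_wrap by (cases "y = []") simp_all
  qed (simp add: assms(2))
qed


section \<open>Chords\<close>

lemma match_le: "i < j \<Longrightarrow> ht w (Suc j) = ht w i \<Longrightarrow> match w i \<le> j"
  unfolding match_def by (rule Least_le) simp

lemma match_spec:
  assumes w: "dyck w" and i: "i < length w" "w ! i"
  shows "i < match w i" "match w i < length w" "ht w (Suc (match w i)) = ht w i"
proof -
  have up: "ht w (Suc i) = ht w i + 1"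
    using ht_Suc[OF i(1)] i(2) by simp
  obtain k where k: "Suc i \<le> k" "k \<le> length w" "ht w k = ht w i"
    using discrete_ivt[of "ht w" "Suc i" "length w" "ht w i", OF ht_Suc_ge] i(1) up
      dyck_ht_nonneg[OF w] w by (auto simp: dyck_def)
  then obtain j where j: "k = Suc j" "i < j"
    using up by (cases k) (auto simp: le_less)
  then have "i < j \<and> ht w (Suc j) = ht w i"
    using k by simp
  then show "i < match w i" "ht w (Suc (match w i)) = ht w i" "match w i < length w"
    using LeastI[of "\<lambda>j. i < j \<and> ht w (Suc j) = ht w i" j] match_le[of i j w] j k
    by (auto simp: match_def)
qed

lemma match_append_left:
  assumes u: "dyck u" and i: "i < length u" "u ! i"
  shows "match (u @ v) i = match u i"
  unfolding match_def[of "u @ v"]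
proof (rule Least_equality)
  show "i < match u i \<and> ht (u @ v) (Suc (match u i)) = ht (u @ v) i"
    using match_spec[OF u i] i by (simp add: ht_append_left)
  fix y assume y: "i < y \<and> ht (u @ v) (Suc y) = ht (u @ v) i"
  show "match u i \<le> y"
  proof (cases "y < length u")
    case True
    then show ?thesis
      using y match_le[of i y u] i by (simp add: ht_append_left)
  next
    case False
    then show ?thesis
      using match_spec(2)[OF u i] by simp
  qed
qed

lemma match_append_right:
  assumes u: "dyck u" and v: "dyck v" and i: "i < length v" "v ! i"
  shows "match (u @ v) (i + length u) = match v i + length u"
  unfolding match_def[of "u @ v"]
proof (rule Least_equality)
  have shift: "ht (u @ v) (k + length u) = ht v k" for k
    using u by (simp add: ht_append_right dyck_def)
  show "i + length u < match v i + length u \<and>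
      ht (u @ v) (Suc (match v i + length u)) = ht (u @ v) (i + length u)"
    using match_spec[OF v i] shift[of "Suc (match v i)"] shift[of i] by simp
  fix y assume y: "i + length u < y \<and> ht (u @ v) (Suc y) = ht (u @ v) (i + length u)"
  define y' where "y' = y - length u"
  have y_eq: "y = y' + length u"
    using y by (simp add: y'_def)
  show "match v i + length u \<le> y"
    using y match_le[of i y' v] shift[of "Suc y'"] shift[of i] by (simp add: y_eq)
qed

lemma match_wrap_outer:
  assumes x: "dyck x"
  shows "match (wrap x) 0 = Suc (length x)"
  unfolding match_def
proof (rule Least_equality)
  show "0 < Suc (length x) \<and> ht (wrap x) (Suc (Suc (length x))) = ht (wrap x) 0"
    using x by (simp add: dyck_def ht_def)
  fix y assume y: "0 < y \<and> ht (wrap x) (Suc y) = ht (wrap x) 0"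
  show "Suc (length x) \<le> y"
  proof (rule ccontr)
    assume "\<not> Suc (length x) \<le> y"
    then show False
      using y ht_wrap[of y x] dyck_ht_nonneg[OF x, of y] by simp
  qed
qed

lemma match_wrap_inner:
  assumes x: "dyck x" and i: "i < length x" "x ! i"
  shows "match (wrap x) (Suc i) = Suc (match x i)"
  unfolding match_def[of "wrap x"]
proof (rule Least_equality)
  show "Suc i < Suc (match x i) \<and> ht (wrap x) (Suc (Suc (match x i))) = ht (wrap x) (Suc i)"
    using match_spec[OF x i] ht_wrap[of "Suc (match x i)" x] ht_wrap[of i x] i by simp
  fix y assume y: "Suc i < y \<and> ht (wrap x) (Suc y) = ht (wrap x) (Suc i)"
  show "Suc (match x i) \<le> y"
  proof (cases "y \<le> length x")
    case True
    then obtain y' where "y = Suc y'"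
      using y by (cases y) auto
    then show ?thesis
      using y True match_le[of i y' x] ht_wrap[of y x] ht_wrap[of i x] i by simp
  next
    case False
    then show ?thesis
      using match_spec(2)[OF x i] by simp
  qed
qed

definition shift_chord :: "nat \<Rightarrow> nat \<times> nat \<Rightarrow> nat \<times> nat" where
  "shift_chord k c = (fst c + k, snd c + k)"

lemma shift_chord_Pair: "shift_chord k (i, j) = (i + k, j + k)"
  by (simp add: shift_chord_def)

lemma fst_shift_chord [simp]: "fst (shift_chord k c) = fst c + k"
  and snd_shift_chord [simp]: "snd (shift_chord k c) = snd c + k"
  by (simp_all add: shift_chord_def)

lemma inj_shift_chord: "inj (shift_chord k)"
  by (auto simp: inj_def shift_chord_def prod_eq_iff)

lemma shift_chord_in_image_iff [simp]: "shift_chord k c \<in> shift_chord k ` A \<longleftrightarrow> c \<in> A"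
  by (rule inj_image_mem_iff[OF inj_shift_chord])

lemma shift_chord_Suc_neq_Pair_0 [simp]: "shift_chord (Suc k) c \<noteq> (0, j)"
  by (simp add: shift_chord_def)

lemma leaf_chord_shift [simp]: "leaf_chord (shift_chord k c) = leaf_chord c"
  by (auto simp: leaf_chord_def shift_chord_def)

lemma strictly_contains_shift [simp]:
  "strictly_contains (shift_chord k c) (shift_chord k d) = strictly_contains c d"
  by (auto simp: strictly_contains_def shift_chord_def)

lemma chords_eq_image: "chords w = (\<lambda>i. (i, match w i)) ` {i. i < length w \<and> w ! i}"
  by (auto simp: chords_def)

lemma finite_chords: "finite (chords w)"
  by (simp add: chords_eq_image)

lemma chords_Nil [simp]: "chords [] = {}"
  by (simp add: chords_def)

lemma chords_bound: "dyck w \<Longrightarrow> c \<in> chords w \<Longrightarrow> fst c < snd c \<and> snd c < length w"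
  using match_spec by (auto simp: chords_def)

lemma image_add_right_mem: "i \<in> (\<lambda>i. i + n) ` B \<longleftrightarrow> n \<le> i \<and> i - n \<in> B"
  for i n :: nat
  by (auto simp: image_iff intro: bexI[of _ "i - n"])

lemma image_Suc_mem: "i \<in> Suc ` B \<longleftrightarrow> 0 < i \<and> i - 1 \<in> B"
  by (cases i) auto

lemma chords_append:
  assumes u: "dyck u" and v: "dyck v"
  shows "chords (u @ v) = chords u \<union> shift_chord (length u) ` chords v"
proof -
  have positions: "{i. i < length (u @ v) \<and> (u @ v) ! i}
      = {i. i < length u \<and> u ! i} \<union> (\<lambda>i. i + length u) ` {i. i < length v \<and> v ! i}"
    by (auto simp: nth_append image_add_right_mem)
  have left: "(\<lambda>i. (i, match (u @ v) i)) ` {i. i < length u \<and> u ! i} = chords u"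
    unfolding chords_eq_image by (rule image_cong) (simp_all add: match_append_left[OF u])
  have right: "(\<lambda>i. (i, match (u @ v) i)) ` (\<lambda>i. i + length u) ` {i. i < length v \<and> v ! i}
      = shift_chord (length u) ` chords v"
    unfolding chords_eq_image image_image
    by (rule image_cong) (simp_all add: match_append_right[OF u v] shift_chord_Pair)
  show ?thesis
    unfolding chords_eq_image[of "u @ v"] positions image_Un left right ..
qed

lemma chords_wrap:
  assumes x: "dyck x"
  shows "chords (wrap x) = insert (outer_chord x) (shift_chord 1 ` chords x)"
proof -
  have positions:
    "{i. i < length (wrap x) \<and> wrap x ! i} = insert 0 (Suc ` {i. i < length x \<and> x ! i})"
    by (auto simp: nth_append nth_Cons' image_Suc_mem)
  have inner: "(\<lambda>i. (i, match (wrap x) i)) ` Suc ` {i. i < length x \<and> x ! i}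
      = shift_chord 1 ` chords x"
    unfolding chords_eq_image image_image
    by (rule image_cong) (simp_all add: match_wrap_inner[OF x] shift_chord_Pair)
  show ?thesis
    unfolding chords_eq_image[of "wrap x"] positions image_insert inner match_wrap_outer[OF x] ..
qed


lemma card_chords: "dyck w \<Longrightarrow> card (chords w) = num_D w"
proof (induction rule: dyck_induct)
  case (wrap x)
  have "outer_chord x \<notin> shift_chord 1 ` chords x"
    by (auto simp: shift_chord_def)
  then show ?case
    using wrap chords_wrap[OF wrap(1)] finite_chords
      card_image[OF inj_on_subset[OF inj_shift_chord]]
    by simp
next
  case (append u v)
  have "chords u \<inter> shift_chord (length u) ` chords v = {}"
    using chords_bound[OF append(1)] by fastforce
  then show ?case
    using append chords_append[OF append(1,2)] finite_chords
      card_image[OF inj_on_subset[OF inj_shift_chord]] by (simp add: card_Un_disjoint)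
qed simp

lemma length_dyck: "dyck w \<Longrightarrow> length w = 2 * num_D w"
  using sum_length_filter_compl[of id w] by (simp add: dyck_def ht_def comp_def)

lemma capacity_append_left: "fst c \<le> length u \<Longrightarrow> capacity (u @ v) c = capacity u c"
  by (simp add: capacity_def)

lemma capacity_append_right:
  "capacity (u @ v) (shift_chord (length u) c) = num_D u + capacity v c"
  by (simp add: capacity_def shift_chord_def)

lemma capacity_wrap_inner:
  "fst c \<le> length x \<Longrightarrow> capacity (wrap x) (shift_chord 1 c) = capacity x c"
  by (simp add: capacity_def shift_chord_def)

lemma capacity_0 [simp]: "capacity w (0, j) = 0"
  by (simp add: capacity_def)

lemma ex_leaf_chord_capacity_0:
  "dyck w \<Longrightarrow> w \<noteq> [] \<Longrightarrow> \<exists>c\<in>chords w. leaf_chord c \<and> capacity w c = 0"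
proof (induction rule: dyck_induct)
  case (wrap x)
  show ?case
  proof (cases "x = []")
    case True
    then show ?thesis
      using chords_wrap[OF wrap(1)] by (auto simp: leaf_chord_def)
  next
    case False
    then obtain c where c: "c \<in> chords x" "leaf_chord c" "capacity x c = 0"
      using wrap by blast
    then have "shift_chord 1 c \<in> chords (wrap x)" "capacity (wrap x) (shift_chord 1 c) = 0"
      using chords_wrap[OF wrap(1)] capacity_wrap_inner[of c x] chords_bound[OF wrap(1) c(1)]
      by simp_all
    then show ?thesis
      using c(2) leaf_chord_shift[of 1 c] by blast
  qed
next
  case (append u v)
  show ?case
  proof (cases "u = []")
    case False
    then obtain c where c: "c \<in> chords u" "leaf_chord c" "capacity u c = 0"
      using append by blast
    then show ?thesis
      using chords_append[OF append(1,2)] capacity_append_left[of c u v]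
        chords_bound[OF append(1) c(1)] by force
  qed (use append in simp)
qed simp


section \<open>Shifted labellings\<close>

type_synonym labelling = "nat \<times> nat \<Rightarrow> nat"

definition shifted_labellings :: "bool list \<Rightarrow> nat \<Rightarrow> labelling set" where
  "shifted_labellings w s = {L. (\<forall>c. c \<notin> chords w \<longrightarrow> L c = 0) \<and>
      (\<forall>c\<in>chords w. \<forall>d\<in>chords w. strictly_contains c d \<longrightarrow> L c \<le> L d) \<and>
      (\<forall>c\<in>chords w. leaf_chord c \<longrightarrow> L c \<le> capacity w c + s)}"

text \<open>Capacities are raised by \<open>s\<close>; this is what the chords of \<open>v\<close> see inside \<open>u @ v\<close>,
  with \<open>s = num_D u\<close>. Monotonicity is required along strict containment, the transitive
  closure of the LS condition.\<close>

definition P_shifted :: "bool list \<Rightarrow> nat \<Rightarrow> int poly" where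
  "P_shifted w s = (\<Sum>L\<in>shifted_labellings w s. monom 1 (\<Sum>c\<in>chords w. L c))"

lemma shifted_labellingsI:
  assumes "\<And>c. c \<notin> chords w \<Longrightarrow> L c = 0"
    and "\<And>c d. c \<in> chords w \<Longrightarrow> d \<in> chords w \<Longrightarrow> strictly_contains c d \<Longrightarrow> L c \<le> L d"
    and "\<And>c. c \<in> chords w \<Longrightarrow> leaf_chord c \<Longrightarrow> L c \<le> capacity w c + s"
  shows "L \<in> shifted_labellings w s"
  using assms unfolding shifted_labellings_def by blast

lemma shifted_labellingsD:
  assumes "L \<in> shifted_labellings w s"
  shows "c \<notin> chords w \<Longrightarrow> L c = 0"
    and "c \<in> chords w \<Longrightarrow> d \<in> chords w \<Longrightarrow> strictly_contains c d \<Longrightarrow> L c \<le> L d"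
    and "c \<in> chords w \<Longrightarrow> leaf_chord c \<Longrightarrow> L c \<le> capacity w c + s"
  using assms unfolding shifted_labellings_def by blast+

lemma contains_mono_of_directly_below_mono:
  fixes L :: labelling
  assumes below: "\<And>c d. directly_below w d c \<Longrightarrow> L c \<le> L d"
  shows "c \<in> chords w \<Longrightarrow> d \<in> chords w \<Longrightarrow> strictly_contains c d \<Longrightarrow> L c \<le> L d"
proof (induction "fst d - fst c + (snd c - snd d)" arbitrary: c d rule: less_induct)
  case less
  show ?case
  proof (cases "directly_below w d c")
    case False
    then obtain e where e: "e \<in> chords w" "strictly_contains c e" "strictly_contains e d"
      using less.prems unfolding directly_below_def by blast
    have "L c \<le> L e"
      using e less.prems by (intro less.hyps) (auto simp: strictly_contains_def)
    also have "L e \<le> L d"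
      using e less.prems by (intro less.hyps) (auto simp: strictly_contains_def)
    finally show ?thesis .
  qed (rule below)
qed

lemma LS_labellings_eq_shifted_labellings: "LS_labellings w = shifted_labellings w 0"
  using contains_mono_of_directly_below_mono[of w]
  unfolding LS_labellings_def shifted_labellings_def directly_below_def by auto

lemma P_poly_eq_P_shifted: "P_poly w = P_shifted w 0"
  unfolding P_poly_def P_shifted_def LS_labellings_eq_shifted_labellings ..

section \<open>Concatenation\<close>

definition split_labelling :: "bool list \<Rightarrow> bool list \<Rightarrow> labelling \<Rightarrow> labelling \<times> labelling" where
  "split_labelling u v L =
    (\<lambda>c. if c \<in> chords u then L c else 0,
     \<lambda>c. if c \<in> chords v then L (shift_chord (length u) c) else 0)"

definition join_labelling :: "bool list \<Rightarrow> bool list \<Rightarrow> labelling \<times> labelling \<Rightarrow> labelling" where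
  "join_labelling u v p = (\<lambda>c.
    if c \<in> chords u then fst p c
    else if c \<in> shift_chord (length u) ` chords v then snd p (fst c - length u, snd c - length u)
    else 0)"

context
  fixes u v :: "bool list"
  assumes u: "dyck u" and v: "dyck v"
begin

lemma chords_append_separated:
  assumes "c \<in> chords u"
  shows "snd c < fst (shift_chord (length u) d)"
  using chords_bound[OF u assms] by (simp add: shift_chord_def)

lemma shift_chord_notin_chords: "shift_chord (length u) d \<notin> chords u"
  using chords_bound[OF u, of "shift_chord (length u) d"] by auto

lemma chords_append_cases:
  assumes "c \<in> chords (u @ v)"
  obtains "c \<in> chords u" | c' where "c' \<in> chords v" "c = shift_chord (length u) c'"
  using assms chords_append[OF u v] by blast

lemma strictly_contains_append_cases:
  assumes c: "c \<in> chords (u @ v)" and d: "d \<in> chords (u @ v)" and cd: "strictly_contains c d"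
  obtains "c \<in> chords u" "d \<in> chords u" "strictly_contains c d"
  | c' d' where "c' \<in> chords v" "d' \<in> chords v" "strictly_contains c' d'"
      "c = shift_chord (length u) c'" "d = shift_chord (length u) d'"
proof (cases rule: chords_append_cases[OF c])
  case 1
  show ?thesis
  proof (cases rule: chords_append_cases[OF d])
    case (2 d')
    then show ?thesis
      using cd chords_append_separated[OF 1, of d'] chords_bound[OF v 2(1)]
      by (simp add: strictly_contains_def)
  qed (use 1 cd that(1) in blast)
next
  case (2 c')
  show ?thesis
  proof (cases rule: chords_append_cases[OF d])
    case 1
    then show ?thesis
      using cd 2 chords_append_separated[OF 1, of c'] chords_bound[OF u 1]
      by (simp add: strictly_contains_def)
  next
    case (2 d')
    then show ?thesis
      using cd \<open>c' \<in> chords v\<close> \<open>c = shift_chord (length u) c'\<close> that(2) by simp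
  qed
qed

lemma split_labelling_mem:
  assumes L: "L \<in> shifted_labellings (u @ v) s"
  shows "split_labelling u v L \<in> shifted_labellings u s \<times> shifted_labellings v (s + num_D u)"
proof -
  have in_u: "c \<in> chords u \<Longrightarrow> c \<in> chords (u @ v)"
    and in_v: "c \<in> chords v \<Longrightarrow> shift_chord (length u) c \<in> chords (u @ v)" for c
    using chords_append[OF u v] by blast+
  have "fst (split_labelling u v L) \<in> shifted_labellings u s"
  proof (rule shifted_labellingsI)
    fix c d
    show "c \<notin> chords u \<Longrightarrow> fst (split_labelling u v L) c = 0"
      by (simp add: split_labelling_def)
    show "c \<in> chords u \<Longrightarrow> d \<in> chords u \<Longrightarrow> strictly_contains c d \<Longrightarrow>
        fst (split_labelling u v L) c \<le> fst (split_labelling u v L) d"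
      using shifted_labellingsD(2)[OF L] in_u by (simp add: split_labelling_def)
    show "c \<in> chords u \<Longrightarrow> leaf_chord c \<Longrightarrow> fst (split_labelling u v L) c \<le> capacity u c + s"
      using shifted_labellingsD(3)[OF L, of c] in_u chords_bound[OF u, of c]
        capacity_append_left[of c u v] by (simp add: split_labelling_def)
  qed
  moreover have "snd (split_labelling u v L) \<in> shifted_labellings v (s + num_D u)"
  proof (rule shifted_labellingsI)
    fix c d
    show "c \<notin> chords v \<Longrightarrow> snd (split_labelling u v L) c = 0"
      by (simp add: split_labelling_def)
    show "c \<in> chords v \<Longrightarrow> d \<in> chords v \<Longrightarrow> strictly_contains c d \<Longrightarrow>
        snd (split_labelling u v L) c \<le> snd (split_labelling u v L) d"
      using shifted_labellingsD(2)[OF L] in_v by (simp add: split_labelling_def)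
    show "c \<in> chords v \<Longrightarrow> leaf_chord c \<Longrightarrow>
        snd (split_labelling u v L) c \<le> capacity v c + (s + num_D u)"
      using shifted_labellingsD(3)[OF L, of "shift_chord (length u) c"] in_v
        capacity_append_right[of u v c] by (simp add: split_labelling_def)
  qed
  ultimately show ?thesis
    by (simp add: mem_Times_iff)
qed

lemma join_labelling_left: "c \<in> chords u \<Longrightarrow> join_labelling u v p c = fst p c"
  by (simp add: join_labelling_def)

lemma join_labelling_right:
  "c \<in> chords v \<Longrightarrow> join_labelling u v p (shift_chord (length u) c) = snd p c"
  using shift_chord_notin_chords by (simp add: join_labelling_def)

lemma join_labelling_mem:
  assumes p: "p \<in> shifted_labellings u s \<times> shifted_labellings v (s + num_D u)"
  shows "join_labelling u v p \<in> shifted_labellings (u @ v) s"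
proof (rule shifted_labellingsI)
  have p1: "fst p \<in> shifted_labellings u s" and p2: "snd p \<in> shifted_labellings v (s + num_D u)"
    using p by auto
  fix c
  show "join_labelling u v p c = 0" if "c \<notin> chords (u @ v)"
    using that unfolding chords_append[OF u v] by (simp add: join_labelling_def)
  show "join_labelling u v p c \<le> capacity (u @ v) c + s" if c: "c \<in> chords (u @ v)" "leaf_chord c"
  proof (cases rule: chords_append_cases[OF c(1)])
    case 1
    then show ?thesis
      using shifted_labellingsD(3)[OF p1 1 c(2)] chords_bound[OF u 1] capacity_append_left[of c u v]
      by (simp add: join_labelling_left)
  next
    case (2 c')
    then show ?thesis
      using shifted_labellingsD(3)[OF p2, of c'] c(2) capacity_append_right[of u v c']
      by (simp add: join_labelling_right)
  qed
  fix d
  assume "c \<in> chords (u @ v)" "d \<in> chords (u @ v)" "strictly_contains c d"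
  then show "join_labelling u v p c \<le> join_labelling u v p d"
    by (cases rule: strictly_contains_append_cases)
      (simp_all add: join_labelling_left join_labelling_right shifted_labellingsD(2)[OF p1]
        shifted_labellingsD(2)[OF p2])
qed

lemma join_split_labelling:
  "L \<in> shifted_labellings (u @ v) s \<Longrightarrow> join_labelling u v (split_labelling u v L) = L"
  unfolding join_labelling_def split_labelling_def shifted_labellings_def chords_append[OF u v]
  by (auto simp: fun_eq_iff shift_chord_def)

lemma split_join_labelling:
  assumes "p \<in> shifted_labellings u s \<times> shifted_labellings v t"
  shows "split_labelling u v (join_labelling u v p) = p"
  using assms shift_chord_notin_chords
  unfolding join_labelling_def split_labelling_def shifted_labellings_def
  by (auto simp: fun_eq_iff prod_eq_iff)

lemma bij_betw_split_labelling:
  "bij_betw (split_labelling u v) (shifted_labellings (u @ v) s)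
     (shifted_labellings u s \<times> shifted_labellings v (s + num_D u))"
proof (rule bij_betw_byWitness[where f' = "join_labelling u v"])
  show "\<forall>L\<in>shifted_labellings (u @ v) s. join_labelling u v (split_labelling u v L) = L"
    using join_split_labelling by blast
  show "\<forall>p\<in>shifted_labellings u s \<times> shifted_labellings v (s + num_D u).
      split_labelling u v (join_labelling u v p) = p"
    using split_join_labelling by blast
  show "split_labelling u v ` shifted_labellings (u @ v) s
      \<subseteq> shifted_labellings u s \<times> shifted_labellings v (s + num_D u)"
    using split_labelling_mem by blast
  show "join_labelling u v ` (shifted_labellings u s \<times> shifted_labellings v (s + num_D u))
      \<subseteq> shifted_labellings (u @ v) s"
    using join_labelling_mem by blast
qed

lemma sum_chords_append:
  "(\<Sum>c\<in>chords (u @ v). L c)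
     = (\<Sum>c\<in>chords u. fst (split_labelling u v L) c) + (\<Sum>c\<in>chords v. snd (split_labelling u v L) c)"
proof -
  have "chords u \<inter> shift_chord (length u) ` chords v = {}"
    using shift_chord_notin_chords by blast
  then have "(\<Sum>c\<in>chords (u @ v). L c)
      = (\<Sum>c\<in>chords u. L c) + (\<Sum>c\<in>shift_chord (length u) ` chords v. L c)"
    using chords_append[OF u v] finite_chords by (simp add: sum.union_disjoint)
  also have "(\<Sum>c\<in>shift_chord (length u) ` chords v. L c)
      = (\<Sum>c\<in>chords v. L (shift_chord (length u) c))"
    using sum.reindex[OF inj_on_subset[OF inj_shift_chord subset_UNIV]] by simp
  finally show ?thesis
    by (simp add: split_labelling_def)
qed

lemma P_shifted_append: "P_shifted (u @ v) s = P_shifted u s * P_shifted v (s + num_D u)"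
proof -
  let ?g = "\<lambda>p. monom (1::int) (\<Sum>c\<in>chords u. fst p c) * monom 1 (\<Sum>c\<in>chords v. snd p c)"
  have "P_shifted (u @ v) s = (\<Sum>L\<in>shifted_labellings (u @ v) s. ?g (split_labelling u v L))"
    unfolding P_shifted_def sum_chords_append by (simp add: mult_monom)
  also have "\<dots> = (\<Sum>p\<in>shifted_labellings u s \<times> shifted_labellings v (s + num_D u). ?g p)"
    by (rule sum.reindex_bij_betw[OF bij_betw_split_labelling])
  also have "\<dots> = P_shifted u s * P_shifted v (s + num_D u)"
    unfolding P_shifted_def sum_product sum.cartesian_product by (simp add: case_prod_beta)
  finally show ?thesis .
qed

end


section \<open>Wrapping\<close>

text \<open>The outer chord carries the smallest label \<open>a \<le> s\<close>; subtracting it from the labels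
  of the inner chords yields a labelling of \<open>x\<close> with capacities raised by \<open>s - a\<close>.\<close>

definition peel_labelling :: "bool list \<Rightarrow> labelling \<Rightarrow> nat \<times> labelling" where
  "peel_labelling x L =
    (L (outer_chord x),
     \<lambda>c. if c \<in> chords x then L (shift_chord 1 c) - L (outer_chord x) else 0)"

definition wrap_labelling :: "bool list \<Rightarrow> nat \<times> labelling \<Rightarrow> labelling" where
  "wrap_labelling x p = (\<lambda>c.
    if c = outer_chord x then fst p
    else if c \<in> shift_chord 1 ` chords x then snd p (fst c - 1, snd c - 1) + fst p
    else 0)"

context
  fixes x :: "bool list"
  assumes x: "dyck x"
begin

lemma chords_wrap_cases:
  assumes "c \<in> chords (wrap x)"
  obtains "c = outer_chord x" | c' where "c' \<in> chords x" "c = shift_chord 1 c'"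
  using assms chords_wrap[OF x] by blast

lemma outer_chord_contains: "c \<in> chords x \<Longrightarrow> strictly_contains (outer_chord x) (shift_chord 1 c)"
  using chords_bound[OF x] by (simp add: strictly_contains_def)

lemma outer_label_le_inner:
  "L \<in> shifted_labellings (wrap x) s \<Longrightarrow> c \<in> chords x \<Longrightarrow> L (outer_chord x) \<le> L (shift_chord 1 c)"
  using shifted_labellingsD(2) outer_chord_contains chords_wrap[OF x] by blast

lemma outer_label_le:
  assumes L: "L \<in> shifted_labellings (wrap x) s"
  shows "L (outer_chord x) \<le> s"
proof (cases "x = []")
  case True
  then show ?thesis
    using shifted_labellingsD(3)[OF L, of "outer_chord x"] chords_wrap[OF x]
    by (simp add: leaf_chord_def)
next
  case False
  then obtain c where c: "c \<in> chords x" "leaf_chord c" "capacity x c = 0"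
    using ex_leaf_chord_capacity_0[OF x] by blast
  have "L (outer_chord x) \<le> L (shift_chord 1 c)"
    using outer_label_le_inner[OF L c(1)] .
  also have "\<dots> \<le> capacity (wrap x) (shift_chord 1 c) + s"
    using shifted_labellingsD(3)[OF L] c chords_wrap[OF x] by simp
  also have "capacity (wrap x) (shift_chord 1 c) = 0"
    using capacity_wrap_inner[of c x] chords_bound[OF x c(1)] c(3) by simp
  finally show ?thesis
    by simp
qed

lemma peel_labelling_mem:
  assumes L: "L \<in> shifted_labellings (wrap x) s"
  shows "peel_labelling x L \<in> (SIGMA a:{..s}. shifted_labellings x (s - a))"
proof -
  let ?a = "L (outer_chord x)"
  have in_wrap: "c \<in> chords x \<Longrightarrow> shift_chord 1 c \<in> chords (wrap x)" for c
    using chords_wrap[OF x] by blast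
  have "snd (peel_labelling x L) \<in> shifted_labellings x (s - ?a)"
  proof (rule shifted_labellingsI)
    fix c d
    show "c \<notin> chords x \<Longrightarrow> snd (peel_labelling x L) c = 0"
      by (simp add: peel_labelling_def)
    show "c \<in> chords x \<Longrightarrow> d \<in> chords x \<Longrightarrow> strictly_contains c d \<Longrightarrow>
        snd (peel_labelling x L) c \<le> snd (peel_labelling x L) d"
      using shifted_labellingsD(2)[OF L] in_wrap by (simp add: peel_labelling_def diff_le_mono)
    show "c \<in> chords x \<Longrightarrow> leaf_chord c \<Longrightarrow> snd (peel_labelling x L) c \<le> capacity x c + (s - ?a)"
      using shifted_labellingsD(3)[OF L, of "shift_chord 1 c"] in_wrap outer_label_le[OF L]
        capacity_wrap_inner[of c x] chords_bound[OF x, of c] by (simp add: peel_labelling_def)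
  qed
  then show ?thesis
    using outer_label_le[OF L] by (simp add: peel_labelling_def)
qed

lemma wrap_labelling_outer: "wrap_labelling x p (outer_chord x) = fst p"
  by (simp add: wrap_labelling_def)

lemma wrap_labelling_inner:
  "c \<in> chords x \<Longrightarrow> wrap_labelling x p (shift_chord 1 c) = snd p c + fst p"
  by (simp add: wrap_labelling_def)

lemma wrap_labelling_outside: "c \<notin> chords (wrap x) \<Longrightarrow> wrap_labelling x p c = 0"
  using chords_wrap[OF x] by (simp add: wrap_labelling_def)

lemma wrap_labelling_mem:
  assumes p: "p \<in> (SIGMA a:{..s}. shifted_labellings x (s - a))"
  shows "wrap_labelling x p \<in> shifted_labellings (wrap x) s"
proof (rule shifted_labellingsI)
  have a: "fst p \<le> s" and L': "snd p \<in> shifted_labellings x (s - fst p)"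
    using p by auto
  fix c
  show "c \<notin> chords (wrap x) \<Longrightarrow> wrap_labelling x p c = 0"
    by (rule wrap_labelling_outside)
  show "wrap_labelling x p c \<le> capacity (wrap x) c + s" if c: "c \<in> chords (wrap x)" "leaf_chord c"
  proof (cases rule: chords_wrap_cases[OF c(1)])
    case (2 c')
    then show ?thesis
      using shifted_labellingsD(3)[OF L', of c'] c(2) a capacity_wrap_inner[of c' x]
        chords_bound[OF x, of c'] wrap_labelling_inner[OF 2(1)] by simp
  qed (simp add: wrap_labelling_outer a)
  fix d
  assume c: "c \<in> chords (wrap x)" and d: "d \<in> chords (wrap x)" and cd: "strictly_contains c d"
  show "wrap_labelling x p c \<le> wrap_labelling x p d"
  proof (cases rule: chords_wrap_cases[OF d])
    case 1
    then show ?thesis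
      using cd by (cases rule: chords_wrap_cases[OF c]) (auto simp: strictly_contains_def)
  next
    case (2 d')
    show ?thesis
    proof (cases rule: chords_wrap_cases[OF c])
      case 1
      then show ?thesis
        using 2 wrap_labelling_outer wrap_labelling_inner by simp
    next
      case (2 c')
      then show ?thesis
        using \<open>d' \<in> chords x\<close> \<open>d = shift_chord 1 d'\<close> cd shifted_labellingsD(2)[OF L', of c' d']
          wrap_labelling_inner by simp
    qed
  qed
qed

lemma wrap_peel_labelling:
  assumes L: "L \<in> shifted_labellings (wrap x) s"
  shows "wrap_labelling x (peel_labelling x L) = L"
proof
  fix c
  show "wrap_labelling x (peel_labelling x L) c = L c"
  proof (cases "c \<in> chords (wrap x)")
    case True
    then show ?thesis
      using outer_label_le_inner[OF L] wrap_labelling_inner wrap_labelling_outer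
      by (cases rule: chords_wrap_cases) (simp_all add: peel_labelling_def)
  qed (simp add: wrap_labelling_outside shifted_labellingsD(1)[OF L])
qed

lemma peel_wrap_labelling:
  assumes p: "p \<in> (SIGMA a:{..s}. shifted_labellings x (s - a))"
  shows "peel_labelling x (wrap_labelling x p) = p"
proof -
  have "snd p \<in> shifted_labellings x (s - fst p)"
    using p by auto
  then have "snd p c = 0" if "c \<notin> chords x" for c
    using that by (rule shifted_labellingsD(1))
  then show ?thesis
    using wrap_labelling_outer wrap_labelling_inner
    by (simp add: peel_labelling_def fun_eq_iff prod_eq_iff)
qed

lemma bij_betw_peel_labelling:
  "bij_betw (peel_labelling x) (shifted_labellings (wrap x) s)
     (SIGMA a:{..s}. shifted_labellings x (s - a))"
proof (rule bij_betw_byWitness[where f' = "wrap_labelling x"])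
  show "\<forall>L\<in>shifted_labellings (wrap x) s. wrap_labelling x (peel_labelling x L) = L"
    using wrap_peel_labelling by blast
  show "\<forall>p\<in>(SIGMA a:{..s}. shifted_labellings x (s - a)). peel_labelling x (wrap_labelling x p) = p"
    using peel_wrap_labelling by blast
  show "peel_labelling x ` shifted_labellings (wrap x) s
      \<subseteq> (SIGMA a:{..s}. shifted_labellings x (s - a))"
    using peel_labelling_mem by blast
  show "wrap_labelling x ` (SIGMA a:{..s}. shifted_labellings x (s - a))
      \<subseteq> shifted_labellings (wrap x) s"
    using wrap_labelling_mem by blast
qed

lemma sum_chords_wrap:
  assumes L: "L \<in> shifted_labellings (wrap x) s"
  shows "(\<Sum>c\<in>chords (wrap x). L c)
    = fst (peel_labelling x L) * Suc (card (chords x)) + (\<Sum>c\<in>chords x. snd (peel_labelling x L) c)"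
proof -
  let ?a = "L (outer_chord x)"
  have "outer_chord x \<notin> shift_chord 1 ` chords x"
    by (auto simp: shift_chord_def)
  then have "(\<Sum>c\<in>chords (wrap x). L c) = ?a + (\<Sum>c\<in>shift_chord 1 ` chords x. L c)"
    using chords_wrap[OF x] finite_chords by simp
  also have "(\<Sum>c\<in>shift_chord 1 ` chords x. L c) = (\<Sum>c\<in>chords x. L (shift_chord 1 c))"
    using sum.reindex[OF inj_on_subset[OF inj_shift_chord subset_UNIV]] by simp
  also have "\<dots> = (\<Sum>c\<in>chords x. snd (peel_labelling x L) c + ?a)"
    using outer_label_le_inner[OF L] by (intro sum.cong) (simp_all add: peel_labelling_def)
  finally show ?thesis
    by (simp add: sum.distrib peel_labelling_def)
qed

lemma P_shifted_wrap:
  assumes fin: "\<And>t. finite (shifted_labellings x t)"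
  shows "P_shifted (wrap x) s
    = (\<Sum>a\<le>s. monom 1 (a * Suc (card (chords x))) * P_shifted x (s - a))"
proof -
  let ?g = "\<lambda>p. monom (1::int) (fst p * Suc (card (chords x))) * monom 1 (\<Sum>c\<in>chords x. snd p c)"
  have "P_shifted (wrap x) s = (\<Sum>L\<in>shifted_labellings (wrap x) s. ?g (peel_labelling x L))"
    unfolding P_shifted_def by (intro sum.cong) (simp_all add: sum_chords_wrap mult_monom)
  also have "\<dots> = (\<Sum>p\<in>(SIGMA a:{..s}. shifted_labellings x (s - a)). ?g p)"
    by (rule sum.reindex_bij_betw[OF bij_betw_peel_labelling])
  also have "\<dots> = (\<Sum>a\<le>s. \<Sum>L\<in>shifted_labellings x (s - a). ?g (a, L))"
    using fin by (subst sum.Sigma) (auto simp: case_prod_beta)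
  finally show ?thesis
    by (simp add: P_shifted_def sum_distrib_left)
qed

end

section \<open>The product formula\<close>

lemma shifted_labellings_Nil: "shifted_labellings [] s = {\<lambda>_. 0}"
  by (auto simp: shifted_labellings_def)

lemma finite_shifted_labellings: "dyck w \<Longrightarrow> finite (shifted_labellings w s)"
proof (induction w arbitrary: s rule: dyck_induct)
  case Nil
  then show ?case
    by (simp add: shifted_labellings_Nil)
next
  case (wrap x)
  then show ?case
    using bij_betw_finite[OF bij_betw_peel_labelling[OF wrap(1)]] by blast
next
  case (append u v)
  then show ?case
    using bij_betw_finite[OF bij_betw_split_labelling[OF append(1,2)]] by blast
qed

lemma P_shifted_eq_qbin:
  "dyck w \<Longrightarrow> P_shifted w s = qbin (s + num_D w) (num_D w) * P_shifted w 0"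
proof (induction w arbitrary: s rule: dyck_induct)
  case Nil
  then show ?case
    by (simp add: P_shifted_def shifted_labellings_Nil)
next
  case (wrap x)
  let ?m = "num_D x"
  have P: "P_shifted (wrap x) t = (\<Sum>a\<le>t. monom 1 (a * Suc ?m) * P_shifted x (t - a))" for t
    using P_shifted_wrap[OF wrap(1) finite_shifted_labellings[OF wrap(1)]] card_chords[OF wrap(1)]
    by simp
  have P0: "P_shifted (wrap x) 0 = P_shifted x 0"
    using P[of 0] by simp
  have "P_shifted (wrap x) s = (\<Sum>a\<le>s. monom 1 (a * Suc ?m) * qbin (s - a + ?m) ?m) * P_shifted x 0"
    unfolding P sum_distrib_right
    by (intro sum.cong refl) (simp only: wrap(2)[of "s - _"] mult.assoc)
  also have "\<dots> = qbin (s + Suc ?m) (Suc ?m) * P_shifted (wrap x) 0"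
    unfolding qbin_hockey_stick P0 ..
  also have "Suc ?m = num_D (wrap x)"
    by simp
  finally show ?case .
next
  case (append u v)
  let ?n = "num_D u" and ?m = "num_D v"
  have "P_shifted (u @ v) s
      = qbin (s + ?n) ?n * qbin (s + ?n + ?m) ?m * (P_shifted u 0 * P_shifted v 0)"
    by (simp only: P_shifted_append[OF append(1,2)] append(3)[of s] append(4)[of "s + ?n"] mult_ac)
  also have "\<dots>
      = qbin (s + ?n + ?m) (?n + ?m) * (P_shifted u 0 * (qbin (?n + ?m) ?m * P_shifted v 0))"
    unfolding qbin_mult by (simp only: mult_ac)
  also have "P_shifted u 0 * (qbin (?n + ?m) ?m * P_shifted v 0) = P_shifted (u @ v) 0"
    by (simp only: P_shifted_append[OF append(1,2)] append(4)[of ?n] add_0)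
  finally show ?case
    by (simp only: length_append filter_append add.assoc)
qed

theorem mainTheorem11:
  fixes l1 l2 :: "bool list" and n1 m1 :: nat
  assumes "dyck l1" and "dyck l2"
    and "length l1 = 2 * n1" and "length l2 = 2 * m1"
  shows "P_poly (l1 @ l2) = qbinom (n1 + m1) n1 * P_poly l1 * P_poly l2"
proof -
  have n1: "num_D l1 = n1" and m1: "num_D l2 = m1"
    using length_dyck[OF assms(1)] length_dyck[OF assms(2)] assms(3,4) by simp_all
  have "P_poly (l1 @ l2) = P_poly l1 * P_shifted l2 n1"
    unfolding P_poly_eq_P_shifted P_shifted_append[OF assms(1,2)] n1 by simp
  also have "P_shifted l2 n1 = qbin (n1 + m1) m1 * P_poly l2"
    using P_shifted_eq_qbin[OF assms(2), of n1] unfolding m1 P_poly_eq_P_shifted .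
  also have "qbin (n1 + m1) m1 = qbinom (n1 + m1) n1"
    using qbinom_eq_qbin[of m1 "n1 + m1"] by (simp add: qbinom_def mult.commute)
  finally show ?thesis
    by (simp only: mult_ac)
qed


end
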